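(* Let $F$ be a dill map with diameter $\delta$ and local rule $f$. (1) If $M,M'\in\mathbb N$ are such that for every $u\in A^*$ and every $j\in\{0,\dots,|u|-1\}$, $d_L(f^*(D_j(u)),f^*(u))\le M+\frac{|f^*(u)|-|f^*(D_j(u))|}{2}$ and $d_L(f^*(D_j(u)),f^*(u))\le M'-\frac{|f^*(u)|-|f^*(D_j(u))|}{2}$, then $F$ is $\frac{M+M'}{\lfloor f\rfloor}$-Lipschitz with respect to $\mathfrak d_L$. (2) If $L>0$ and $x\in A^{\mathbb N}$ satisfies $|f(x_{[i,i+\delta)})|\ge L$ for every $i\in\mathbb N$, then for every $y\in A^{\mathbb N}$, $\mathfrak d_L(F(x),F(y))\le(2\delta-1)\frac{\lceil f\rceil}{L}\mathfrak d_L(x,y)$. In particular, if $\tau$ is a substitution and $x$ satisfies $|\tau(x_i)|\ge L$ for all $i$, then $\mathfrak d_L(\overline\tau(x),\overline\tau(y))\le\frac{\lceil\tau\rceil}{L}\mathfrak d_L(x,y)$ for every $y$. (3) $F$ is $(2\delta-1)\frac{\lceil f\rceil}{\lfloor f\rfloor}$-Lipschitz with respect to $\mathfrak d_L$; in particular every substitution $\tau$ yields a $\frac{\lceil\tau\rceil}{\lfloor\tau\rfloor}$-Lipschitz map $\overline\tau$ with respect to $\mathfrak d_L$.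
   Context: $A$ is a finite alphabet; $u_{[i,j)}=u_i\cdots u_{j-1}$. A dill map with diameter $\delta\ge1$ has local rule $f:A^\delta\to A^+$ and is $F(x)=f(x_{[0,\delta)})f(x_{[1,\delta+1)})\cdots$; $\lfloor f\rfloor=\min_{u\in A^\delta}|f(u)|$, $\lceil f\rceil=\max_{u\in A^\delta}|f(u)|$. $f^*(u)=f(u_{[0,\delta)})\cdots f(u_{[|u|-\delta,|u|)})$ if $|u|\ge\delta$, empty otherwise. $D_j(u)$ is $u$ with the letter at position $j$ deleted. A substitution is a nonerasing morphism $\tau:A^*\to A^*$ (a dill map with $\delta=1$), $\overline\tau(z)=\tau(z_0)\tau(z_1)\cdots$, $\lfloor\tau\rfloor=\min_a|\tau(a)|$, $\lceil\tau\rceil=\max_a|\tau(a)|$. The Levenshtein distance is $d_L(u,v)=\frac{|u|+|v|}{2}-\ell$, $\ell$ the length of a longest common subsequence. The Feldman pseudo-metric is $\mathfrak d_L(x,y)=\limsup_{l\to\infty}d_L(x_{[0,l)},y_{[0,l)})/l$. A map $G$ is $C$-Lipschitz w.r.t. $\mathfrak d_L$ if $\mathfrak d_L(G(x),G(y))\le C\,\mathfrak d_L(x,y)$ for all $x,y$. *)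

theory Defs
  imports "HOL-Analysis.Analysis" "HOL-Library.Sublist" "HOL-Library.Extended_Real"
begin

definition pre :: "(nat \<Rightarrow> 'a) \<Rightarrow> nat \<Rightarrow> 'a list" where
  "pre x l = map x [0..<l]"

definition window :: "nat \<Rightarrow> (nat \<Rightarrow> 'a) \<Rightarrow> nat \<Rightarrow> 'a list" where
  "window \<delta> x i = map x [i..<i+\<delta>]"

definition fstar :: "('a list \<Rightarrow> 'a list) \<Rightarrow> nat \<Rightarrow> 'a list \<Rightarrow> 'a list" where
  "fstar f \<delta> u = (if \<delta> \<le> length u
     then concat (map (\<lambda>i. f (take \<delta> (drop i u))) [0..<length u - \<delta> + 1]) else [])"

text \<open>Dill map F(x) = f(x[0,\<delta>)) f(x[1,\<delta>+1)) ...; its k-th letter is the k-th letter of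
  f*(x[0,k+\<delta>)), which has length at least k+1 (outputs are nonempty).\<close>
definition dill :: "('a list \<Rightarrow> 'a list) \<Rightarrow> nat \<Rightarrow> (nat \<Rightarrow> 'a) \<Rightarrow> nat \<Rightarrow> 'a" where
  "dill f \<delta> x k = fstar f \<delta> (pre x (k + \<delta>)) ! k"

definition subst_inf :: "('a \<Rightarrow> 'a list) \<Rightarrow> (nat \<Rightarrow> 'a) \<Rightarrow> nat \<Rightarrow> 'a" where
  "subst_inf \<tau> z k = concat (map (\<lambda>i. \<tau> (z i)) [0..<k+1]) ! k"

definition rule_min :: "('a list \<Rightarrow> 'a list) \<Rightarrow> nat \<Rightarrow> nat" where
  "rule_min f \<delta> = Min {length (f u) | u. length u = \<delta>}"

definition rule_max :: "('a list \<Rightarrow> 'a list) \<Rightarrow> nat \<Rightarrow> nat" where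
  "rule_max f \<delta> = Max {length (f u) | u. length u = \<delta>}"

definition subst_min :: "('a \<Rightarrow> 'a list) \<Rightarrow> nat" where
  "subst_min \<tau> = Min (range (\<lambda>a. length (\<tau> a)))"

definition subst_max :: "('a \<Rightarrow> 'a list) \<Rightarrow> nat" where
  "subst_max \<tau> = Max (range (\<lambda>a. length (\<tau> a)))"

definition del_at :: "nat \<Rightarrow> 'a list \<Rightarrow> 'a list" where
  "del_at j u = take j u @ drop (Suc j) u"

definition lcs_len :: "'a list \<Rightarrow> 'a list \<Rightarrow> nat" where
  "lcs_len u v = Max {length w | w. subseq w u \<and> subseq w v}"

definition lev :: "'a list \<Rightarrow> 'a list \<Rightarrow> real" where
  "lev u v = (real (length u) + real (length v)) / 2 - real (lcs_len u v)"

definition feldman :: "(nat \<Rightarrow> 'a) \<Rightarrow> (nat \<Rightarrow> 'a) \<Rightarrow> ereal" where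
  "feldman x y = limsup (\<lambda>l. ereal (lev (pre x l) (pre y l) / real l))"

definition lipschitz_feldman :: "real \<Rightarrow> ((nat \<Rightarrow> 'a) \<Rightarrow> (nat \<Rightarrow> 'a)) \<Rightarrow> bool" where
  "lipschitz_feldman C G \<longleftrightarrow> (\<forall>x y. feldman (G x) (G y) \<le> ereal C * feldman x y)"

end

theory Submission
  imports Defs
begin

text \<open>A longest common subsequence w of the input prefixes x[0,l) and y[0,l) arises from each
  of them by l - |w| single deletions. A single deletion changes f*(u) only in the at most
  \<delta> windows that contain the deleted letter, so it costs at most (\<delta> - 1)\<lceil>f\<rceil> letters of
  f*(D_j u) and \<delta>\<lceil>f\<rceil> letters of f*(u) in a longest common subsequence (in part (1) these
  costs are M and M' by hypothesis). Since the lcs length satisfies the triangle inequality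
  lcs(u,v) + lcs(v,w) \<le> lcs(u,w) + |v|, the costs add up along the deletions and through w,
  so f*(x[0,l)) and f*(y[0,l)) have an lcs missing at most (M + M') d_L(x[0,l), y[0,l))
  letters of either. An output prefix of length n is f*(x[0,l)) up to one block, and
  l \<le> n / L + \<delta> - 1, which yields the factor (M + M') / L for the limsup.\<close>

lemma finite_common_subseq_lengths: "finite {length w | w. subseq w u \<and> subseq w v}"
proof (rule finite_subset)
  show "{length w | w. subseq w u \<and> subseq w v} \<subseteq> {..length u}"
    using list_emb_length by fastforce
qed simp

lemma lcs_len_ge: "subseq w u \<Longrightarrow> subseq w v \<Longrightarrow> length w \<le> lcs_len u v"
  unfolding lcs_len_def using finite_common_subseq_lengths by (intro Max_ge) auto

lemma lcs_len_witness:
  obtains w where "subseq w u" "subseq w v" "length w = lcs_len u v"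
proof -
  have "lcs_len u v \<in> {length w | w. subseq w u \<and> subseq w v}"
    unfolding lcs_len_def using finite_common_subseq_lengths by (intro Max_in) auto
  then obtain w where "subseq w u" "subseq w v" "length w = lcs_len u v" by auto
  then show ?thesis by (rule that)
qed

lemma lcs_len_le_length: "lcs_len u v \<le> length u" "lcs_len u v \<le> length v"
proof -
  obtain w where "subseq w u" "subseq w v" "length w = lcs_len u v" by (rule lcs_len_witness)
  then show "lcs_len u v \<le> length u" "lcs_len u v \<le> length v"
    using list_emb_length by fastforce+
qed

lemma lcs_len_commute: "lcs_len u v = lcs_len v u"
  unfolding lcs_len_def by (rule arg_cong[where f = Max]) blast

lemma lcs_len_mono:
  assumes "subseq u u'" "subseq v v'"
  shows "lcs_len u v \<le> lcs_len u' v'"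
proof -
  obtain w where "subseq w u" "subseq w v" "length w = lcs_len u v" by (rule lcs_len_witness)
  then show ?thesis using assms lcs_len_ge subseq_order.order_trans by metis
qed

lemma lcs_len_subseq: "subseq w u \<Longrightarrow> lcs_len w u = length w"
  using lcs_len_ge[of w w u] lcs_len_le_length(1)[of w u] by simp

lemma lev_eq_of_length_eq:
  assumes "length u = length v"
  shows "lev u v = real (length u) - real (lcs_len u v)"
proof -
  have "(real (length u) + real (length v)) / 2 = real (length u)" using assms by simp
  then show ?thesis unfolding lev_def by linarith
qed

lemma subseq_nths_mono: "I \<subseteq> J \<Longrightarrow> subseq (nths xs I) (nths xs J)"
proof (induction xs arbitrary: I J)
  case (Cons x xs)
  have "{j. Suc j \<in> I} \<subseteq> {j. Suc j \<in> J}" using Cons.prems by auto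
  then have "subseq (nths xs {j. Suc j \<in> I}) (nths xs {j. Suc j \<in> J})" by (rule Cons.IH)
  then show ?case using Cons.prems by (auto simp: nths_Cons)
qed simp

text \<open>Longest common subsequences of u, v and of v, w occupy position sets I and J of v;
  the positions in I \<inter> J give a common subsequence of u and w, and
  |I \<inter> J| \<ge> |I| + |J| - |v|.\<close>
lemma lcs_len_triangle: "lcs_len u v + lcs_len v w \<le> lcs_len u w + length v"
proof -
  obtain w1 where w1: "subseq w1 u" "subseq w1 v" "length w1 = lcs_len u v"
    by (rule lcs_len_witness)
  obtain w2 where w2: "subseq w2 v" "subseq w2 w" "length w2 = lcs_len v w"
    by (rule lcs_len_witness)
  obtain I J where I: "w1 = nths v I" and J: "w2 = nths v J"
    using w1(2) w2(1) subseq_conv_nths by metis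
  let ?I = "{i. i < length v \<and> i \<in> I}" and ?J = "{i. i < length v \<and> i \<in> J}"
  have "subseq (nths v (I \<inter> J)) w1" "subseq (nths v (I \<inter> J)) w2"
    unfolding I J by (simp_all add: subseq_nths_mono)
  then have "length (nths v (I \<inter> J)) \<le> lcs_len u w"
    using w1(1) w2(2) by (meson lcs_len_ge subseq_order.order_trans)
  moreover have "length (nths v (I \<inter> J)) = card (?I \<inter> ?J)"
    unfolding length_nths by (rule arg_cong[where f = card]) blast
  ultimately have "card (?I \<inter> ?J) \<le> lcs_len u w" by simp
  moreover have "card (?I \<union> ?J) \<le> length v"
    using card_mono[of "{..<length v}" "?I \<union> ?J"] by auto
  moreover have "card ?I + card ?J = card (?I \<union> ?J) + card (?I \<inter> ?J)"
    by (rule card_Un_Int) auto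
  ultimately show ?thesis
    using w1(3) w2(3) I J by (simp add: length_nths)
qed

definition deletion_bounded :: "('a list \<Rightarrow> 'b list) \<Rightarrow> real \<Rightarrow> real \<Rightarrow> bool" where
  "deletion_bounded F M M' \<longleftrightarrow> (\<forall>u. \<forall>j < length u.
     real (length (F (del_at j u))) - M \<le> real (lcs_len (F (del_at j u)) (F u)) \<and>
     real (length (F u)) - M' \<le> real (lcs_len (F (del_at j u)) (F u)))"

lemma deletion_bounded_iff_lev:
  "deletion_bounded F M M' \<longleftrightarrow> (\<forall>u. \<forall>j < length u.
     lev (F (del_at j u)) (F u) \<le> M + (real (length (F u)) - real (length (F (del_at j u)))) / 2 \<and>
     lev (F (del_at j u)) (F u) \<le> M' - (real (length (F u)) - real (length (F (del_at j u)))) / 2)"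
proof -
  have iff: "(a + b) / 2 - c \<le> m + (b - a) / 2 \<longleftrightarrow> a - m \<le> c"
    "(a + b) / 2 - c \<le> m - (b - a) / 2 \<longleftrightarrow> b - m \<le> c" for a b c m :: real
    by argo+
  show ?thesis unfolding deletion_bounded_def lev_def by (simp only: iff)
qed

lemma deletion_bounded_nonneg:
  assumes "deletion_bounded F M M'"
  shows "0 \<le> M" "0 \<le> M'"
proof -
  let ?D = "F (del_at 0 [undefined])" and ?U = "F [undefined]"
  have "real (length ?D) - M \<le> real (lcs_len ?D ?U)" "real (length ?U) - M' \<le> real (lcs_len ?D ?U)"
    using assms unfolding deletion_bounded_def by auto
  then show "0 \<le> M" "0 \<le> M'"
    using lcs_len_le_length[of ?D ?U] by linarith+
qed

lemma subseq_del_at_if_shorter: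
  "subseq w u \<Longrightarrow> length w < length u \<Longrightarrow> \<exists>j < length u. subseq w (del_at j u)"
proof (induction rule: list_emb.induct)
  case (list_emb_Cons2 x y xs ys)
  then obtain j where "j < length ys" "subseq xs (del_at j ys)" by auto
  then show ?case
    using list_emb_Cons2 by (intro exI[of _ "Suc j"]) (auto simp: del_at_def)
qed (auto intro: exI[of _ 0] simp: del_at_def)

lemma lcs_len_image_subseq:
  assumes F: "deletion_bounded F M M'" and "subseq w u"
  shows "real (length (F w)) - M * real (length u - length w) \<le> real (lcs_len (F w) (F u))
    \<and> real (length (F u)) - M' * real (length u - length w) \<le> real (lcs_len (F w) (F u))"
  using \<open>subseq w u\<close>
proof (induction "length u - length w" arbitrary: u)
  case 0
  then have "length w = length u" using list_emb_length by fastforce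
  then have "w = u" using \<open>subseq w u\<close> subseq_same_length by blast
  then show ?case by (simp add: lcs_len_subseq)
next
  case (Suc k)
  then have "length w < length u" by linarith
  then obtain j where j: "j < length u" "subseq w (del_at j u)"
    using subseq_del_at_if_shorter Suc.prems by blast
  let ?s = "del_at j u"
  have k: "k = length ?s - length w" using Suc.hyps(2) j(1) by (simp add: del_at_def)
  have IH: "real (length (F w)) - M * real k \<le> real (lcs_len (F w) (F ?s))
      \<and> real (length (F ?s)) - M' * real k \<le> real (lcs_len (F w) (F ?s))"
    using Suc.hyps(1)[OF k j(2)] k by simp
  have step: "real (length (F ?s)) - M \<le> real (lcs_len (F ?s) (F u))
      \<and> real (length (F u)) - M' \<le> real (lcs_len (F ?s) (F u))"
    using F j(1) unfolding deletion_bounded_def by blast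
  have tri: "real (lcs_len (F w) (F ?s)) + real (lcs_len (F ?s) (F u))
      \<le> real (lcs_len (F w) (F u)) + real (length (F ?s))"
    using lcs_len_triangle[of "F w" "F ?s" "F u"] by linarith
  have e: "real (length u - length w) = real k + 1" using Suc.hyps(2) by simp
  show ?case
    unfolding e distrib_left mult_1_right using IH step tri by linarith
qed

lemma lcs_len_image_ge:
  assumes F: "deletion_bounded F M M'"
  shows "real (length (F u)) - M' * (real (length u) - real (lcs_len u v))
      - M * (real (length v) - real (lcs_len u v)) \<le> real (lcs_len (F u) (F v))"
proof -
  obtain w where w: "subseq w u" "subseq w v" "length w = lcs_len u v"
    by (rule lcs_len_witness)
  have "real (length (F u)) - M' * (real (length u) - real (lcs_len u v)) \<le> real (lcs_len (F w) (F u))"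
    using lcs_len_image_subseq[OF F w(1)] w(3) lcs_len_le_length(1)[of u v] by (simp add: of_nat_diff)
  moreover have "real (length (F w)) - M * (real (length v) - real (lcs_len u v)) \<le> real (lcs_len (F w) (F v))"
    using lcs_len_image_subseq[OF F w(2)] w(3) lcs_len_le_length(2)[of u v] by (simp add: of_nat_diff)
  moreover have "real (lcs_len (F u) (F w)) + real (lcs_len (F w) (F v))
      \<le> real (lcs_len (F u) (F v)) + real (length (F w))"
    using lcs_len_triangle[of "F u" "F w" "F v"] by linarith
  ultimately show ?thesis by (simp add: lcs_len_commute)
qed

definition window_images :: "('a list \<Rightarrow> 'b list) \<Rightarrow> nat \<Rightarrow> 'a list \<Rightarrow> nat \<Rightarrow> nat \<Rightarrow> 'b list" where
  "window_images f \<delta> u a b = concat (map (\<lambda>i. f (take \<delta> (drop i u))) [a..<b])"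

lemma fstar_eq_window_images:
  assumes "\<delta> \<ge> 1"
  shows "fstar f \<delta> u = window_images f \<delta> u 0 (length u + 1 - \<delta>)"
  using assms by (cases "\<delta> \<le> length u") (simp_all add: fstar_def window_images_def Suc_diff_le)

lemma window_images_append:
  "a \<le> b \<Longrightarrow> b \<le> c \<Longrightarrow> window_images f \<delta> u a c = window_images f \<delta> u a b @ window_images f \<delta> u b c"
  using upt_add_eq_append[of a b "c - b"] by (simp add: window_images_def)

lemma length_concat_map_le:
  "(\<And>i. i \<in> set xs \<Longrightarrow> length (g i) \<le> R) \<Longrightarrow> length (concat (map g xs)) \<le> length xs * R"
  by (induction xs) (auto simp: add_mono)

lemma length_window_images_le:
  assumes "\<And>v. length v = \<delta> \<Longrightarrow> length (f v) \<le> R" and "b + \<delta> \<le> length u + 1"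
  shows "length (window_images f \<delta> u a b) \<le> (b - a) * R"
proof -
  have "length (f (take \<delta> (drop i u))) \<le> R" if "i \<in> set [a..<b]" for i
    using that assms(2) by (intro assms(1)) auto
  then have "length (concat (map (\<lambda>i. f (take \<delta> (drop i u))) [a..<b])) \<le> length [a..<b] * R"
    by (rule length_concat_map_le)
  then show ?thesis by (simp add: window_images_def)
qed

lemma window_images_del_at_before:
  assumes "b \<le> j + 1 - \<delta>"
  shows "window_images f \<delta> (del_at j u) a b = window_images f \<delta> u a b"
proof -
  have "take \<delta> (drop i (del_at j u)) = take \<delta> (drop i u)" if "i < b" for i
    using that assms by (simp add: del_at_def take_drop min_def)
  then show ?thesis unfolding window_images_def by (intro arg_cong[where f = concat] map_cong) auto
qed

lemma window_images_del_at_after: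
  assumes "j < length u" "min j b \<le> a"
  shows "window_images f \<delta> (del_at j u) a b = window_images f \<delta> u (Suc a) (Suc b)"
proof (cases "j \<le> a")
  case True
  have "drop i (del_at j u) = drop (Suc i) u" if "a \<le> i" for i
    using that True assms(1) by (simp add: del_at_def)
  then show ?thesis unfolding window_images_def map_Suc_upt[symmetric] map_map
    by (intro arg_cong[where f = concat] map_cong) auto
next
  case False
  then have "b \<le> a" using assms(2) by simp
  then show ?thesis by (simp add: window_images_def)
qed

text \<open>Deleting u_j only changes the windows that contain position j: at most \<delta> windows of u
  are replaced by at most \<delta> - 1 windows of D_j(u).\<close>
lemma fstar_del_at_split:
  assumes \<delta>: "\<delta> \<ge> 1" and R: "\<And>v. length v = \<delta> \<Longrightarrow> length (f v) \<le> R" and j: "j < length u"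
  obtains P X Y S where "fstar f \<delta> u = P @ X @ S" "fstar f \<delta> (del_at j u) = P @ Y @ S"
    "length X \<le> \<delta> * R" "length Y \<le> (\<delta> - 1) * R"
proof (cases "\<delta> \<le> length u")
  case False
  then have "fstar f \<delta> u = []" "fstar f \<delta> (del_at j u) = []"
    using j by (simp_all add: fstar_def del_at_def)
  then show ?thesis using that[of "[]" "[]" "[]" "[]"] by simp
next
  case True
  define N where "N = length u + 1 - \<delta>"
  define a where "a = j + 1 - \<delta>"
  define c where "c = min j (N - 1)"
  have ac: "a \<le> c" "c < N" "Suc c - a \<le> \<delta>" "c - a \<le> \<delta> - 1"
    using j True \<delta> by (auto simp: a_def c_def N_def)
  have "length (del_at j u) + 1 - \<delta> = N - 1" using j True \<delta> by (simp add: N_def del_at_def)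
  then have fd: "fstar f \<delta> (del_at j u) = window_images f \<delta> (del_at j u) 0 (N - 1)"
    using fstar_eq_window_images[OF \<delta>] by metis
  have "min j (N - 1) \<le> c" "Suc (N - 1) = N" using ac(2) by (simp_all add: c_def)
  then have after: "window_images f \<delta> (del_at j u) c (N - 1) = window_images f \<delta> u (Suc c) N"
    using window_images_del_at_after[OF j, where a = c and b = "N - 1" and f = f and \<delta> = \<delta>] by simp
  let ?W = "window_images f \<delta> u" and ?V = "window_images f \<delta> (del_at j u)"
  show ?thesis
  proof (rule that)
    have "fstar f \<delta> u = ?W 0 N"
      using fstar_eq_window_images[OF \<delta>] by (simp add: N_def)
    also have "\<dots> = ?W 0 a @ ?W a N"
      using ac by (intro window_images_append) auto
    also have "?W a N = ?W a (Suc c) @ ?W (Suc c) N"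
      using ac by (intro window_images_append) auto
    finally show "fstar f \<delta> u = ?W 0 a @ ?W a (Suc c) @ ?W (Suc c) N" .
    have "fstar f \<delta> (del_at j u) = ?V 0 a @ ?V a (N - 1)"
      unfolding fd using ac by (intro window_images_append) auto
    also have "?V 0 a = ?W 0 a"
      by (rule window_images_del_at_before) (simp add: a_def)
    also have "?V a (N - 1) = ?V a c @ ?W (Suc c) N"
      unfolding after[symmetric] using ac by (intro window_images_append) auto
    finally show "fstar f \<delta> (del_at j u) = ?W 0 a @ ?V a c @ ?W (Suc c) N" .
    have "length (?W a (Suc c)) \<le> (Suc c - a) * R"
      using ac True by (intro length_window_images_le[OF R]) (auto simp: N_def)
    also have "\<dots> \<le> \<delta> * R" using ac(3) by (rule mult_right_mono) simp
    finally show "length (?W a (Suc c)) \<le> \<delta> * R" .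
    have "length (?V a c) \<le> (c - a) * R"
      using ac j True by (intro length_window_images_le[OF R]) (auto simp: N_def del_at_def)
    also have "\<dots> \<le> (\<delta> - 1) * R" using ac(4) by (rule mult_right_mono) simp
    finally show "length (?V a c) \<le> (\<delta> - 1) * R" .
  qed
qed

lemma deletion_bounded_fstar:
  assumes \<delta>: "\<delta> \<ge> 1" and R: "\<And>v. length v = \<delta> \<Longrightarrow> length (f v) \<le> R"
  shows "deletion_bounded (fstar f \<delta>) ((real \<delta> - 1) * real R) (real \<delta> * real R)"
  unfolding deletion_bounded_def
proof (intro allI impI)
  fix u :: "'a list" and j assume j: "j < length u"
  obtain P X Y S where split: "fstar f \<delta> u = P @ X @ S" "fstar f \<delta> (del_at j u) = P @ Y @ S"
    and X: "length X \<le> \<delta> * R" and Y: "length Y \<le> (\<delta> - 1) * R"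
    by (rule fstar_del_at_split[OF \<delta> R j])
  have "subseq (P @ S) (P @ Y @ S)" "subseq (P @ S) (P @ X @ S)"
    by (simp_all add: subseq_append' subseq_drop_many)
  then have common: "length P + length S \<le> lcs_len (fstar f \<delta> (del_at j u)) (fstar f \<delta> u)"
    unfolding split using lcs_len_ge by fastforce
  have "real ((\<delta> - 1) * R) = (real \<delta> - 1) * real R" using \<delta> by (simp add: of_nat_diff)
  then have "real (length Y) \<le> (real \<delta> - 1) * real R" "real (length X) \<le> real \<delta> * real R"
    using X Y by (metis of_nat_le_iff of_nat_mult)+
  with common show "real (length (fstar f \<delta> (del_at j u))) - (real \<delta> - 1) * real R
        \<le> real (lcs_len (fstar f \<delta> (del_at j u)) (fstar f \<delta> u))
      \<and> real (length (fstar f \<delta> u)) - real \<delta> * real R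
        \<le> real (lcs_len (fstar f \<delta> (del_at j u)) (fstar f \<delta> u))"
    unfolding split by simp
qed

definition dill_blocks :: "('a list \<Rightarrow> 'a list) \<Rightarrow> nat \<Rightarrow> (nat \<Rightarrow> 'a) \<Rightarrow> nat \<Rightarrow> 'a list" where
  "dill_blocks f \<delta> x m = concat (map (\<lambda>i. f (window \<delta> x i)) [0..<m])"

lemma dill_blocks_Suc: "dill_blocks f \<delta> x (Suc m) = dill_blocks f \<delta> x m @ f (window \<delta> x m)"
  by (simp add: dill_blocks_def)

lemma prefix_dill_blocks: "m \<le> m' \<Longrightarrow> prefix (dill_blocks f \<delta> x m) (dill_blocks f \<delta> x m')"
proof (induction m' rule: dec_induct)
  case (step k)
  then show ?case by (simp add: dill_blocks_Suc prefix_order.trans[OF _ prefixI])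
qed simp

lemma length_window [simp]: "length (window \<delta> x i) = \<delta>"
  by (simp add: window_def)

lemma length_dill_blocks_ge:
  assumes "\<And>i. L \<le> real (length (f (window \<delta> x i)))"
  shows "real m * L \<le> real (length (dill_blocks f \<delta> x m))"
proof (induction m)
  case (Suc m)
  then show ?case using assms[of m] by (simp add: dill_blocks_Suc algebra_simps)
qed (simp add: dill_blocks_def)

lemma length_dill_blocks_ge_nonerasing:
  assumes "\<And>v. length v = \<delta> \<Longrightarrow> f v \<noteq> []"
  shows "m \<le> length (dill_blocks f \<delta> x m)"
proof -
  have "real m * 1 \<le> real (length (dill_blocks f \<delta> x m))"
    using assms by (intro length_dill_blocks_ge) (simp add: Suc_le_eq)
  then show ?thesis by simp
qed

lemma length_dill_blocks_le:
  assumes "\<And>v. length v = \<delta> \<Longrightarrow> length (f v) \<le> R"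
  shows "length (dill_blocks f \<delta> x m) \<le> m * R"
proof -
  have "length (concat (map (\<lambda>i. f (window \<delta> x i)) [0..<m])) \<le> length [0..<m] * R"
    by (rule length_concat_map_le) (simp add: assms)
  then show ?thesis by (simp add: dill_blocks_def)
qed

lemma prefix_take_if_length_le: "prefix xs ys \<Longrightarrow> length xs \<le> n \<Longrightarrow> prefix xs (take n ys)"
  using prefix_length_le[of xs ys] by (intro prefix_length_prefix[OF _ take_is_prefix]) auto

lemma lcs_len_take_prefixes:
  assumes "prefix A X" "prefix B Y" "length A \<le> n"
  shows "lcs_len A B \<le> lcs_len (take n X) (take n Y) + (length B - n)"
proof -
  have A: "subseq A (take n X)"
    using assms(1,3) by (simp add: prefix_imp_subseq prefix_take_if_length_le)
  show ?thesis
  proof (cases "length B \<le> n")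
    case True
    then have "subseq B (take n Y)"
      using assms(2) by (simp add: prefix_imp_subseq prefix_take_if_length_le)
    with A have "lcs_len A B \<le> lcs_len (take n X) (take n Y)" by (rule lcs_len_mono)
    then show ?thesis by simp
  next
    case False
    then have Y: "take n Y = take n B"
      using assms(2) by (auto simp: prefix_def)
    have "lcs_len A B + lcs_len B (take n B) \<le> lcs_len A (take n B) + length B"
      by (rule lcs_len_triangle)
    moreover have "lcs_len B (take n B) = n"
      using False lcs_len_subseq[OF prefix_imp_subseq[OF take_is_prefix], of n B]
      by (simp add: lcs_len_commute)
    moreover have "lcs_len A (take n B) \<le> lcs_len (take n X) (take n B)"
      using A by (simp add: lcs_len_mono)
    ultimately show ?thesis unfolding Y by linarith
  qed
qed

lemma fstar_pre:
  assumes "\<delta> \<ge> 1"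
  shows "fstar f \<delta> (pre x l) = dill_blocks f \<delta> x (l + 1 - \<delta>)"
proof -
  have "take \<delta> (drop i (pre x l)) = window \<delta> x i" if "i < l + 1 - \<delta>" for i
    using that by (simp add: pre_def window_def drop_map take_map)
  moreover have "length (pre x l) = l" by (simp add: pre_def)
  ultimately show ?thesis
    unfolding fstar_eq_window_images[OF assms] window_images_def dill_blocks_def
    by (intro arg_cong[where f = concat] map_cong) auto
qed

lemma dill_eq_nth_dill_blocks: "\<delta> \<ge> 1 \<Longrightarrow> dill f \<delta> x k = dill_blocks f \<delta> x (Suc k) ! k"
  using fstar_pre[of \<delta> f x "k + \<delta>"] by (simp add: dill_def)

lemma pre_dill_eq_take_dill_blocks:
  assumes \<delta>: "\<delta> \<ge> 1" and nonerasing: "\<And>v. length v = \<delta> \<Longrightarrow> f v \<noteq> []"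
    and n: "n \<le> length (dill_blocks f \<delta> x m)"
  shows "pre (dill f \<delta> x) n = take n (dill_blocks f \<delta> x m)"
proof (rule nth_equalityI)
  show "length (pre (dill f \<delta> x) n) = length (take n (dill_blocks f \<delta> x m))"
    using n by (simp add: pre_def)
next
  fix k assume "k < length (pre (dill f \<delta> x) n)"
  then have k: "k < n" by (simp add: pre_def)
  have "dill f \<delta> x k = dill_blocks f \<delta> x (Suc k) ! k"
    using \<delta> by (rule dill_eq_nth_dill_blocks)
  moreover have "Suc k \<le> length (dill_blocks f \<delta> x (Suc k))"
    using nonerasing by (rule length_dill_blocks_ge_nonerasing)
  ultimately have "dill f \<delta> x k = dill_blocks f \<delta> x (max m (Suc k)) ! k"
    using prefix_dill_blocks[of "Suc k" "max m (Suc k)" f \<delta> x] by (auto simp: prefix_def nth_append)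
  also have "\<dots> = dill_blocks f \<delta> x m ! k"
    using prefix_dill_blocks[of m "max m (Suc k)" f \<delta> x] k n by (auto simp: prefix_def nth_append)
  finally show "pre (dill f \<delta> x) n ! k = take n (dill_blocks f \<delta> x m) ! k"
    using k by (simp add: pre_def)
qed

lemma dill_blocks_index:
  assumes "\<And>v. length v = \<delta> \<Longrightarrow> f v \<noteq> []"
  shows "\<exists>p. length (dill_blocks f \<delta> x p) \<le> n \<and> n < length (dill_blocks f \<delta> x (Suc p))"
proof -
  have "Suc n \<le> length (dill_blocks f \<delta> x (Suc n))"
    using assms by (rule length_dill_blocks_ge_nonerasing)
  then have "n < length (dill_blocks f \<delta> x (Suc n))" by simp
  moreover have "\<not> n < length (dill_blocks f \<delta> x 0)" by (simp add: dill_blocks_def)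
  ultimately show ?thesis
    using ex_least_nat_less[of "\<lambda>q. n < length (dill_blocks f \<delta> x q)"] by (auto simp: not_less)
qed

text \<open>Up to part of one block of length at most R, the output prefix of length n is the image
  f* of the input prefix of length p + \<delta> - 1.\<close>
lemma lev_pre_dill_le:
  assumes \<delta>: "\<delta> \<ge> 1" and nonerasing: "\<And>v. length v = \<delta> \<Longrightarrow> f v \<noteq> []"
    and R: "\<And>v. length v = \<delta> \<Longrightarrow> length (f v) \<le> R"
    and F: "deletion_bounded (fstar f \<delta>) M M'"
    and p: "length (dill_blocks f \<delta> x p) \<le> n" "n < length (dill_blocks f \<delta> x (Suc p))"
  shows "lev (pre (dill f \<delta> x) n) (pre (dill f \<delta> y) n)
    \<le> real R + (M + M') * lev (pre x (p + \<delta> - 1)) (pre y (p + \<delta> - 1))"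
proof -
  define l where "l = p + \<delta> - 1"
  define A where "A = dill_blocks f \<delta> x p"
  define B where "B = dill_blocks f \<delta> y p"
  define Fx where "Fx = pre (dill f \<delta> x) n"
  define Fy where "Fy = pre (dill f \<delta> y) n"
  define E where "E = (M + M') * lev (pre x l) (pre y l)"
  have "l + 1 - \<delta> = p" using \<delta> by (simp add: l_def)
  then have blocks: "fstar f \<delta> (pre x l) = A" "fstar f \<delta> (pre y l) = B"
    unfolding A_def B_def by (simp_all only: fstar_pre[OF \<delta>])
  have AB: "real (length A) - E \<le> real (lcs_len A B)" "real (length B) - E \<le> real (lcs_len A B)"
    using lcs_len_image_ge[OF F, of "pre x l" "pre y l"] lcs_len_image_ge[OF F, of "pre y l" "pre x l"]
    unfolding blocks by (simp_all add: E_def lev_eq_of_length_eq pre_def lcs_len_commute algebra_simps)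
  have pre_dill: "pre (dill f \<delta> z) n = take n (dill_blocks f \<delta> z (Suc n))" for z
    using pre_dill_eq_take_dill_blocks[OF \<delta> nonerasing] length_dill_blocks_ge_nonerasing[of \<delta> f "Suc n" z]
      nonerasing by simp
  have "p \<le> n"
    using length_dill_blocks_ge_nonerasing[of \<delta> f p x] nonerasing p(1) by simp
  then have "lcs_len A B \<le> lcs_len Fx Fy + (length B - n)"
    unfolding Fx_def Fy_def pre_dill A_def B_def using p(1)
    by (intro lcs_len_take_prefixes prefix_dill_blocks) simp_all
  then have lcs: "real (lcs_len A B) \<le> real (lcs_len Fx Fy) + real (length B - n)"
    by (metis of_nat_add of_nat_le_iff)
  have "real n < real (length A) + real R"
    using p(2) R[of "window \<delta> x p"] by (simp add: A_def dill_blocks_Suc)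
  then have "real n - real R - E \<le> real (lcs_len Fx Fy)"
    using lcs AB by (cases "length B \<le> n") (simp_all add: of_nat_diff)
  then show ?thesis
    using lev_eq_of_length_eq[of Fx Fy] by (simp add: Fx_def Fy_def pre_def E_def l_def)
qed

lemma limsup_reindex_le:
  fixes u :: "nat \<Rightarrow> ereal"
  assumes "filterlim h at_top sequentially"
  shows "limsup (\<lambda>n. u (h n)) \<le> limsup u"
proof -
  have "eventually (\<lambda>n. u (h n) < c) sequentially" if "limsup u < c" for c
  proof -
    have "eventually (\<lambda>m. u m < c) sequentially" using that Limsup_lessD by blast
    then show ?thesis using assms filterlim_iff by fastforce
  qed
  then show ?thesis using Limsup_le_iff[where F = sequentially] by blast
qed

lemma limsup_le_mult_limsup_reindex:
  fixes a b :: "nat \<Rightarrow> real" and l :: "nat \<Rightarrow> nat" and C c :: real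
  assumes l: "filterlim l at_top sequentially" and C: "0 \<le> C"
    and bound: "eventually (\<lambda>n. a n \<le> C * b (l n) + c / real n) sequentially"
  shows "limsup (\<lambda>n. ereal (a n)) \<le> ereal C * limsup (\<lambda>n. ereal (b n))"
proof -
  have "limsup (\<lambda>n. ereal (a n)) \<le> limsup (\<lambda>n. ereal C * ereal (b (l n)) + ereal (c / real n))"
    using bound by (intro Limsup_mono) (auto elim: eventually_mono)
  also have "\<dots> \<le> limsup (\<lambda>n. ereal C * ereal (b (l n))) + limsup (\<lambda>n. ereal (c / real n))"
    by (rule ereal_limsup_add_mono)
  also have "limsup (\<lambda>n. ereal (c / real n)) = 0"
  proof -
    have "(\<lambda>n. ereal (c / real n)) \<longlonglongrightarrow> ereal 0"
      by (intro tendsto_ereal lim_const_over_n)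
    then show ?thesis using lim_imp_Limsup[OF trivial_limit_sequentially] zero_ereal_def by metis
  qed
  also have "limsup (\<lambda>n. ereal C * ereal (b (l n))) = ereal C * limsup (\<lambda>n. ereal (b (l n)))"
    by (rule limsup_ereal_mult_left[OF C])
  also have "\<dots> \<le> ereal C * limsup (\<lambda>n. ereal (b n))"
    by (rule ereal_mult_left_mono[OF limsup_reindex_le[OF l]]) (use C in simp)
  finally show ?thesis by simp
qed

lemma lev_pre_bounds: "0 \<le> lev (pre x l) (pre y l)" "lev (pre x l) (pre y l) \<le> real l"
  using lcs_len_le_length(1)[of "pre x l" "pre y l"]
  by (simp_all add: lev_eq_of_length_eq pre_def)

lemma finite_rule_lengths:
  fixes f :: "'a::finite list \<Rightarrow> 'b list"
  shows "finite {length (f u) | u. length u = \<delta>}"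
proof -
  have "finite {u :: 'a list. length u = \<delta>}"
    using finite_lists_length_eq[of "UNIV :: 'a set" \<delta>] by simp
  then show ?thesis by (rule finite_image_set)
qed

lemma length_le_rule_max:
  fixes f :: "'a::finite list \<Rightarrow> 'a list"
  shows "length u = \<delta> \<Longrightarrow> length (f u) \<le> rule_max f \<delta>"
  unfolding rule_max_def using finite_rule_lengths[of f \<delta>] by (intro Max_ge) auto

lemma rule_min_le_length:
  fixes f :: "'a::finite list \<Rightarrow> 'a list"
  shows "length u = \<delta> \<Longrightarrow> rule_min f \<delta> \<le> length (f u)"
  unfolding rule_min_def using finite_rule_lengths[of f \<delta>] by (intro Min_le) auto

lemma rule_min_pos:
  fixes f :: "'a::finite list \<Rightarrow> 'a list"
  assumes "\<And>u. length u = \<delta> \<Longrightarrow> f u \<noteq> []"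
  shows "0 < rule_min f \<delta>"
proof -
  have "rule_min f \<delta> \<in> {length (f u) | u. length u = \<delta>}"
    unfolding rule_min_def using finite_rule_lengths[of f \<delta>]
    by (intro Min_in) (auto intro: exI[of _ "replicate \<delta> undefined"])
  then show ?thesis using assms by auto
qed

lemma filterlim_dill_block_index:
  assumes R: "\<And>v. length v = \<delta> \<Longrightarrow> length (f v) \<le> R"
    and p: "\<And>n. n < length (dill_blocks f \<delta> x (Suc (p n)))"
  shows "filterlim p at_top sequentially"
  unfolding filterlim_at_top eventually_sequentially
proof (intro allI)
  fix Z
  have "Z \<le> p n" if "Suc Z * R \<le> n" for n
  proof -
    have "n < Suc (p n) * R"
      using p[of n] length_dill_blocks_le[of \<delta> f R x "Suc (p n)", OF R] by linarith
    with that have "Suc Z * R < Suc (p n) * R" by linarith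
    then show ?thesis by (simp add: mult_less_cancel2)
  qed
  then show "\<exists>N. \<forall>n\<ge>N. Z \<le> p n" by blast
qed

text \<open>The output prefix of length n contains p complete blocks of length at least L each,
  so the input prefix behind it has length l = p + \<delta> - 1 \<le> n / L + \<delta> - 1.\<close>
lemma lev_pre_dill_div_le:
  assumes \<delta>: "\<delta> \<ge> 1" and nonerasing: "\<And>v. length v = \<delta> \<Longrightarrow> f v \<noteq> []"
    and R: "\<And>v. length v = \<delta> \<Longrightarrow> length (f v) \<le> R"
    and F: "deletion_bounded (fstar f \<delta>) M M'"
    and L: "L > 0" and Lx: "\<And>i. L \<le> real (length (f (window \<delta> x i)))"
    and p: "length (dill_blocks f \<delta> x p) \<le> n" "n < length (dill_blocks f \<delta> x (Suc p))"
    and "n > 0"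
  defines "l \<equiv> p + \<delta> - 1"
  shows "lev (pre (dill f \<delta> x) n) (pre (dill f \<delta> y) n) / real n
    \<le> (M + M') / L * (lev (pre x l) (pre y l) / real l) + (R + (M + M') * (real \<delta> - 1)) / real n"
proof -
  define K where "K = M + M'"
  define g where "g = lev (pre x l) (pre y l) / real l"
  have K: "0 \<le> K" using deletion_bounded_nonneg[OF F] by (simp add: K_def)
  have g: "0 \<le> g" "g \<le> 1" "lev (pre x l) (pre y l) = g * real l"
    using lev_pre_bounds[of x l y] by (auto simp: g_def divide_le_eq_1)
  have "real p * L \<le> real n"
    using length_dill_blocks_ge[of L f \<delta> x, OF Lx, of p] p(1) by linarith
  then have "g * real p \<le> g * (real n / L)"
    using L g(1) by (intro mult_left_mono) (simp_all add: field_simps)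
  moreover have "g * (real \<delta> - 1) \<le> real \<delta> - 1"
    using mult_right_mono[OF g(2), of "real \<delta> - 1"] \<delta> by simp
  moreover have "real l = real p + (real \<delta> - 1)" using \<delta> by (simp add: l_def)
  ultimately have "g * real l \<le> g * (real n / L) + (real \<delta> - 1)"
    by (simp add: distrib_left)
  then have "K * (g * real l) \<le> K * (g * (real n / L) + (real \<delta> - 1))"
    using K by (rule mult_left_mono)
  then have "K * lev (pre x l) (pre y l) \<le> K / L * g * real n + K * (real \<delta> - 1)"
    unfolding g(3) by (simp add: algebra_simps)
  then have "lev (pre (dill f \<delta> x) n) (pre (dill f \<delta> y) n) \<le> K / L * g * real n + (R + K * (real \<delta> - 1))"
    using lev_pre_dill_le[OF \<delta> nonerasing R F p, of y] by (simp add: l_def K_def)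
  then show ?thesis using \<open>n > 0\<close> by (simp add: field_simps K_def g_def)
qed

lemma feldman_dill_le_of_deletion_bounded:
  fixes f :: "'a::finite list \<Rightarrow> 'a list" and L M M' :: real
  assumes \<delta>: "\<delta> \<ge> 1" and nonerasing: "\<And>v. length v = \<delta> \<Longrightarrow> f v \<noteq> []"
    and F: "deletion_bounded (fstar f \<delta>) M M'"
    and L: "L > 0" and Lx: "\<And>i. L \<le> real (length (f (window \<delta> x i)))"
  shows "feldman (dill f \<delta> x) (dill f \<delta> y) \<le> ereal ((M + M') / L) * feldman x y"
proof -
  have R: "\<And>v. length v = \<delta> \<Longrightarrow> length (f v) \<le> rule_max f \<delta>"
    by (rule length_le_rule_max)
  have "\<forall>n. \<exists>q. length (dill_blocks f \<delta> x q) \<le> n \<and> n < length (dill_blocks f \<delta> x (Suc q))"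
    using dill_blocks_index[of \<delta> f, OF nonerasing] by blast
  then obtain p where p: "\<And>n. length (dill_blocks f \<delta> x (p n)) \<le> n"
    "\<And>n. n < length (dill_blocks f \<delta> x (Suc (p n)))"
    by metis
  have "filterlim p at_top sequentially"
    using R p(2) by (rule filterlim_dill_block_index)
  then have "filterlim (\<lambda>n. p n + \<delta> - 1) at_top sequentially"
    by (rule filterlim_at_top_mono) (use \<delta> in \<open>auto intro!: always_eventually\<close>)
  moreover have "0 \<le> (M + M') / L"
    using deletion_bounded_nonneg[OF F] L by simp
  moreover have "eventually (\<lambda>n. lev (pre (dill f \<delta> x) n) (pre (dill f \<delta> y) n) / real n
      \<le> (M + M') / L * (\<lambda>l. lev (pre x l) (pre y l) / real l) (p n + \<delta> - 1)
        + (rule_max f \<delta> + (M + M') * (real \<delta> - 1)) / real n) sequentially"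
    unfolding eventually_sequentially
    using lev_pre_dill_div_le[OF \<delta> nonerasing R F L Lx p(1) p(2)] by (intro exI[of _ 1]) simp
  ultimately show ?thesis
    unfolding feldman_def by (rule limsup_le_mult_limsup_reindex)
qed

lemma lipschitz_feldman_dill_of_deletion_bounded:
  fixes f :: "'a::finite list \<Rightarrow> 'a list"
  assumes \<delta>: "\<delta> \<ge> 1" and nonerasing: "\<And>v. length v = \<delta> \<Longrightarrow> f v \<noteq> []"
    and F: "deletion_bounded (fstar f \<delta>) M M'"
  shows "lipschitz_feldman ((M + M') / real (rule_min f \<delta>)) (dill f \<delta>)"
  unfolding lipschitz_feldman_def
proof (intro allI)
  fix x y :: "nat \<Rightarrow> 'a"
  show "feldman (dill f \<delta> x) (dill f \<delta> y) \<le> ereal ((M + M') / real (rule_min f \<delta>)) * feldman x y"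
    using rule_min_pos[of \<delta> f, OF nonerasing]
    by (intro feldman_dill_le_of_deletion_bounded[OF \<delta> nonerasing F])
      (simp_all add: rule_min_le_length)
qed

lemma feldman_dill_le:
  fixes f :: "'a::finite list \<Rightarrow> 'a list" and L :: real
  assumes \<delta>: "\<delta> \<ge> 1" and nonerasing: "\<And>v. length v = \<delta> \<Longrightarrow> f v \<noteq> []"
    and L: "L > 0" and Lx: "\<And>i. L \<le> real (length (f (window \<delta> x i)))"
  shows "feldman (dill f \<delta> x) (dill f \<delta> y)
    \<le> ereal ((2 * real \<delta> - 1) * real (rule_max f \<delta>) / L) * feldman x y"
proof -
  have "deletion_bounded (fstar f \<delta>) ((real \<delta> - 1) * real (rule_max f \<delta>)) (real \<delta> * real (rule_max f \<delta>))"
    using \<delta> length_le_rule_max by (rule deletion_bounded_fstar)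
  from feldman_dill_le_of_deletion_bounded[OF \<delta> nonerasing this L Lx]
  show ?thesis by (simp add: algebra_simps)
qed

lemma lipschitz_feldman_dill:
  fixes f :: "'a::finite list \<Rightarrow> 'a list"
  assumes \<delta>: "\<delta> \<ge> 1" and nonerasing: "\<And>v. length v = \<delta> \<Longrightarrow> f v \<noteq> []"
  shows "lipschitz_feldman ((2 * real \<delta> - 1) * real (rule_max f \<delta>) / real (rule_min f \<delta>)) (dill f \<delta>)"
  unfolding lipschitz_feldman_def
  using rule_min_pos[of \<delta> f, OF nonerasing]
  by (intro allI feldman_dill_le[OF \<delta> nonerasing]) (simp_all add: rule_min_le_length)

definition subst_rule :: "('a \<Rightarrow> 'a list) \<Rightarrow> 'a list \<Rightarrow> 'a list" where
  "subst_rule \<tau> u = \<tau> (hd u)"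

lemma subst_inf_eq_dill: "subst_inf \<tau> = dill (subst_rule \<tau>) 1"
proof (intro ext)
  fix z k
  have "dill (subst_rule \<tau>) 1 z k = dill_blocks (subst_rule \<tau>) 1 z (Suc k) ! k"
    by (simp add: dill_eq_nth_dill_blocks)
  also have "dill_blocks (subst_rule \<tau>) 1 z (Suc k) = concat (map (\<lambda>i. \<tau> (z i)) [0..<k + 1])"
    unfolding dill_blocks_def by (simp add: subst_rule_def window_def)
  finally show "subst_inf \<tau> z k = dill (subst_rule \<tau>) 1 z k"
    by (simp add: subst_inf_def)
qed

lemma rule_lengths_subst_rule: "{length (subst_rule \<tau> u) | u. length u = 1} = range (\<lambda>a. length (\<tau> a))"
proof (intro equalityI subsetI)
  fix n assume "n \<in> range (\<lambda>a. length (\<tau> a))"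
  then obtain a where "n = length (\<tau> a)" by blast
  then show "n \<in> {length (subst_rule \<tau> u) | u. length u = 1}"
    by (intro CollectI exI[of _ "[a]"]) (simp add: subst_rule_def)
qed (auto simp: subst_rule_def)

lemma rule_max_subst_rule: "rule_max (subst_rule \<tau>) 1 = subst_max \<tau>"
  unfolding rule_max_def subst_max_def rule_lengths_subst_rule ..

lemma rule_min_subst_rule: "rule_min (subst_rule \<tau>) 1 = subst_min \<tau>"
  unfolding rule_min_def subst_min_def rule_lengths_subst_rule ..

lemma feldman_subst_inf_le:
  fixes \<tau> :: "'a::finite \<Rightarrow> 'a list" and L :: real
  assumes "\<And>a. \<tau> a \<noteq> []" and "L > 0" and "\<And>i. L \<le> real (length (\<tau> (x i)))"
  shows "feldman (subst_inf \<tau> x) (subst_inf \<tau> y) \<le> ereal (real (subst_max \<tau>) / L) * feldman x y"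
proof -
  have "feldman (dill (subst_rule \<tau>) 1 x) (dill (subst_rule \<tau>) 1 y)
    \<le> ereal ((2 * real (1::nat) - 1) * real (rule_max (subst_rule \<tau>) 1) / L) * feldman x y"
    using assms by (intro feldman_dill_le) (simp_all add: subst_rule_def window_def)
  then show ?thesis by (simp only: subst_inf_eq_dill rule_max_subst_rule) simp
qed

lemma lipschitz_feldman_subst_inf:
  fixes \<tau> :: "'a::finite \<Rightarrow> 'a list"
  assumes "\<And>a. \<tau> a \<noteq> []"
  shows "lipschitz_feldman (real (subst_max \<tau>) / real (subst_min \<tau>)) (subst_inf \<tau>)"
proof -
  have "lipschitz_feldman ((2 * real (1::nat) - 1) * real (rule_max (subst_rule \<tau>) 1)
      / real (rule_min (subst_rule \<tau>) 1)) (dill (subst_rule \<tau>) 1)"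
    using assms by (intro lipschitz_feldman_dill) (simp_all add: subst_rule_def)
  then show ?thesis by (simp only: subst_inf_eq_dill rule_max_subst_rule rule_min_subst_rule) simp
qed

theorem corollaryc:
  fixes f :: "'a::finite list \<Rightarrow> 'a list" and \<delta> :: nat
  assumes delta: "\<delta> \<ge> 1"
    and nonerasing: "\<And>u. length u = \<delta> \<Longrightarrow> f u \<noteq> []"
  shows
   "(\<forall>M M' :: nat.
       (\<forall>u :: 'a list. \<forall>j < length u.
          lev (fstar f \<delta> (del_at j u)) (fstar f \<delta> u)
            \<le> real M + (real (length (fstar f \<delta> u)) - real (length (fstar f \<delta> (del_at j u)))) / 2
        \<and> lev (fstar f \<delta> (del_at j u)) (fstar f \<delta> u)
            \<le> real M' - (real (length (fstar f \<delta> u)) - real (length (fstar f \<delta> (del_at j u)))) / 2)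
       \<longrightarrow> lipschitz_feldman ((real M + real M') / real (rule_min f \<delta>)) (dill f \<delta>))
    \<and> (\<forall>(L::real) (x :: nat \<Rightarrow> 'a). L > 0 \<and> (\<forall>i. real (length (f (window \<delta> x i))) \<ge> L) \<longrightarrow>
          (\<forall>y. feldman (dill f \<delta> x) (dill f \<delta> y)
               \<le> ereal ((2 * real \<delta> - 1) * real (rule_max f \<delta>) / L) * feldman x y))
    \<and> (\<forall>(\<tau> :: 'a \<Rightarrow> 'a list) (L::real) (x :: nat \<Rightarrow> 'a).
          (\<forall>a. \<tau> a \<noteq> []) \<and> L > 0 \<and> (\<forall>i. real (length (\<tau> (x i))) \<ge> L) \<longrightarrow>
          (\<forall>y. feldman (subst_inf \<tau> x) (subst_inf \<tau> y)
               \<le> ereal (real (subst_max \<tau>) / L) * feldman x y))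
    \<and> lipschitz_feldman ((2 * real \<delta> - 1) * real (rule_max f \<delta>) / real (rule_min f \<delta>)) (dill f \<delta>)
    \<and> (\<forall>\<tau> :: 'a \<Rightarrow> 'a list. (\<forall>a. \<tau> a \<noteq> []) \<longrightarrow>
          lipschitz_feldman (real (subst_max \<tau>) / real (subst_min \<tau>)) (subst_inf \<tau>))"
proof -
  have "lipschitz_feldman ((real M + real M') / real (rule_min f \<delta>)) (dill f \<delta>)"
    if "deletion_bounded (fstar f \<delta>) (real M) (real M')" for M M' :: nat
    by (rule lipschitz_feldman_dill_of_deletion_bounded[OF delta _ that]) (simp add: nonerasing)
  moreover have "feldman (dill f \<delta> x) (dill f \<delta> y)
      \<le> ereal ((2 * real \<delta> - 1) * real (rule_max f \<delta>) / L) * feldman x y"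
    if "L > 0" "\<forall>i. L \<le> real (length (f (window \<delta> x i)))" for L x y
    using that by (intro feldman_dill_le[OF delta]) (simp_all add: nonerasing)
  moreover have "lipschitz_feldman ((2 * real \<delta> - 1) * real (rule_max f \<delta>) / real (rule_min f \<delta>))
      (dill f \<delta>)"
    by (rule lipschitz_feldman_dill[OF delta]) (simp add: nonerasing)
  ultimately show ?thesis
    using feldman_subst_inf_le lipschitz_feldman_subst_inf
    unfolding deletion_bounded_iff_lev by blast
qed

end
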